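(* For every $n\ge1$, \[ R_n=\inf\big\{R_n(\mathbb{P}):\ \mathbb{P}\in\mathcal{P}_n,\ {}^{\gamma}\mathbb{P}\pi=\mathbb{P}\ \text{for all }(\gamma,\pi)\in S_{inv}\times S_n\big\}. \]
   Context: Scheduling on two machines with $n$ tasks. A processing-time matrix is $T\in\mathbb{R}_{++}^{2\times n}$; an allocation is $X\in\{0,1\}^{2\times n}$ with $X_{1j}+X_{2j}=1$; makespan $M(X,T)=\max_{i\in\{1,2\}}\sum_jX_{ij}T_{ij}$; $M^*(T)=\min_XM(X,T)$. $\mathcal{P}_n$ is the set of Borel probability measures on $\mathbb{R}^n$ supported in $\mathbb{R}_{++}^n$. For $\mathbb{P}\in\mathcal{P}_n$, algorithm $\mathcal{A}^{\mathbb{P}}$ draws $\mathbf{z}\sim\mathbb{P}$ and sends task $j$ to machine 1 iff $T_{1j}/T_{2j}<z_j$ (else to machine 2); $M(\mathbb{P},T)$ is its expected makespan, $R_n(\mathbb{P})=\sup_TM(\mathbb{P},T)/M^*(T)\in[1,\infty]$, and $R_n=\inf_{\mathbb{P}\in\mathcal{P}_n}R_n(\mathbb{P})$. $S_n$ is the symmetric group on $[n]$; $\mathbf{z}\pi$ is $\mathbf{z}$ with entries permuted by $\pi$. $S_{inv}=\{id,inv\}$ acts by ${}^{id}\mathbf{x}=\mathbf{x}$, ${}^{inv}\mathbf{x}=(1/x_1,\dots,1/x_n)$. ${}^{\gamma}\mathbb{P}\pi$ is the distribution of ${}^{\gamma}\mathbf{z}\pi$ for $\mathbf{z}\sim\mathbb{P}$.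 *)

theory Defs
  imports "HOL-Probability.Probability"
begin

text \<open>Two machines, tasks indexed by the finite type 'n (so n = CARD('n) \<ge> 1).
  A processing-time matrix T is given by its two rows T1 T2 :: real^'n.\<close>

definition makespan :: "('n::finite \<Rightarrow> bool) \<Rightarrow> real^'n \<Rightarrow> real^'n \<Rightarrow> real" where
  "makespan X T1 T2 = max (\<Sum>j\<in>{j. X j}. T1 $ j) (\<Sum>j\<in>{j. \<not> X j}. T2 $ j)"

definition opt_makespan :: "real^'n::finite \<Rightarrow> real^'n \<Rightarrow> real" where
  "opt_makespan T1 T2 = Min (range (\<lambda>X. makespan X T1 T2))"

definition pos_times :: "((real^('n::finite)) \<times> (real^'n)) set" where
  "pos_times = {(T1, T2). \<forall>j. 0 < T1 $ j \<and> 0 < T2 $ j}"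

definition alg_alloc :: "real^'n::finite \<Rightarrow> real^'n \<Rightarrow> real^'n \<Rightarrow> ('n \<Rightarrow> bool)" where
  "alg_alloc z T1 T2 = (\<lambda>j. T1 $ j / T2 $ j < z $ j)"

definition Pn :: "(real^'n::finite) measure set" where
  "Pn = {P. prob_space P \<and> sets P = sets (borel :: (real^'n) measure)
             \<and> measure P {z. \<forall>j. 0 < z $ j} = 1}"

definition exp_makespan :: "(real^'n::finite) measure \<Rightarrow> real^'n \<Rightarrow> real^'n \<Rightarrow> real" where
  "exp_makespan P T1 T2 = (\<integral>z. makespan (alg_alloc z T1 T2) T1 T2 \<partial>P)"

definition ratio :: "(real^'n::finite) measure \<Rightarrow> ereal" where
  "ratio P = (SUP T\<in>pos_times. ereal (exp_makespan P (fst T) (snd T) / opt_makespan (fst T) (snd T)))"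

text \<open>Group actions: inversion (for gamma = True) followed by permutation of entries.\<close>
definition inv_act :: "bool \<Rightarrow> real^'n::finite \<Rightarrow> real^'n" where
  "inv_act g z = (if g then (\<chi> j. 1 / z $ j) else z)"

definition perm_act :: "real^'n::finite \<Rightarrow> ('n \<Rightarrow> 'n) \<Rightarrow> real^'n" where
  "perm_act z \<pi> = (\<chi> j. z $ (\<pi> j))"

definition symmetric_dist :: "(real^'n::finite) measure \<Rightarrow> bool" where
  "symmetric_dist P \<longleftrightarrow> (\<forall>g::bool. \<forall>\<pi>. \<pi> permutes (UNIV :: 'n set) \<longrightarrow>
       distr P borel (\<lambda>z. perm_act (inv_act g z) \<pi>) = P)"

end

theory Submission
  imports Defs
begin

(* A threshold distribution P can be replaced by its symmetrization: the uniform mixture of the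
   images of P under the 2 n! maps z \<mapsto> (z or 1/z, then permuted). The mixture is symmetric,
   and it is no worse than P because each image is no worse: permuting the thresholds relabels
   the tasks, and inverting them swaps the two machines, except that ties T1/T2 = z are then
   broken towards machine 1. Such ties are harmless, since the nonstrict rule on (T1, T2) is the
   limit of the strict rule on the cheaper instance (c T1, T2) as c increases to 1. *)

section \<open>Makespan\<close>

lemma makespan_eq_sum_if:
  "makespan X T1 T2 = max (\<Sum>j\<in>UNIV. if X j then T1 $ j else 0) (\<Sum>j\<in>UNIV. if X j then 0 else T2 $ j)"
  unfolding makespan_def by (simp add: sum.If_cases Collect_neg_eq)

lemma borel_measurable_makespan:
  fixes T1 T2 :: "real^'n::finite"
  assumes [measurable]: "\<And>j. Measurable.pred M (\<lambda>z. X z j)"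
  shows "(\<lambda>z. makespan (X z) T1 T2) \<in> borel_measurable M"
  unfolding makespan_eq_sum_if by measurable

lemma makespan_nonneg:
  fixes T1 T2 :: "real^'n::finite"
  assumes "\<And>j. 0 \<le> T1 $ j" "\<And>j. 0 \<le> T2 $ j"
  shows "0 \<le> makespan X T1 T2"
  unfolding makespan_eq_sum_if using assms by (simp add: sum_nonneg le_max_iff_disj)

lemma makespan_le_sum:
  fixes T1 T2 :: "real^'n::finite"
  assumes "\<And>j. 0 \<le> T1 $ j" "\<And>j. 0 \<le> T2 $ j"
  shows "makespan X T1 T2 \<le> (\<Sum>j\<in>UNIV. T1 $ j) + (\<Sum>j\<in>UNIV. T2 $ j)"
proof -
  have "(\<Sum>j\<in>UNIV. if X j then T1 $ j else 0) \<le> (\<Sum>j\<in>UNIV. T1 $ j)"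
       "(\<Sum>j\<in>UNIV. if X j then 0 else T2 $ j) \<le> (\<Sum>j\<in>UNIV. T2 $ j)"
    using assms by (intro sum_mono; simp)+
  moreover have "0 \<le> (\<Sum>j\<in>UNIV. T1 $ j)" "0 \<le> (\<Sum>j\<in>UNIV. T2 $ j)"
    using assms by (auto intro: sum_nonneg)
  ultimately show ?thesis unfolding makespan_eq_sum_if by linarith
qed

lemma makespan_Not_alloc: "makespan (\<lambda>j. \<not> X j) T1 T2 = makespan X T2 T1"
proof -
  have "(if \<not> P then a else b) = (if P then b else a)" for P and a b :: real by simp
  then show ?thesis unfolding makespan_eq_sum_if by (simp only: max.commute)
qed

lemma perm_act_nth [simp]: "perm_act z \<pi> $ j = z $ \<pi> j"
  by (simp add: perm_act_def)

lemma makespan_permute_alloc: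
  fixes T1 T2 :: "real^'n::finite"
  assumes p: "\<pi> permutes UNIV"
  shows "makespan (\<lambda>j. X (\<pi> j)) T1 T2 = makespan X (perm_act T1 (inv \<pi>)) (perm_act T2 (inv \<pi>))"
proof -
  have bij: "bij_betw (inv \<pi>) UNIV UNIV"
    using permutes_inv[OF p] permutes_imp_bij by blast
  have reindex: "(\<Sum>j\<in>UNIV. g j) = (\<Sum>k\<in>UNIV. g (inv \<pi> k))" for g :: "'n \<Rightarrow> real"
    using sum.reindex_bij_betw[OF bij, of g] by simp
  have "\<pi> (inv \<pi> k) = k" for k using permutes_inverses(1)[OF p] by simp
  then show ?thesis
    unfolding makespan_eq_sum_if perm_act_nth by (subst (1 2) reindex) simp
qed

lemma opt_makespan_le: "opt_makespan T1 T2 \<le> makespan X T1 T2"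
  unfolding opt_makespan_def by (rule Min_le) auto

lemma opt_makespan_attained: "\<exists>X. opt_makespan T1 T2 = makespan X T1 T2"
proof -
  have "opt_makespan T1 T2 \<in> range (\<lambda>X. makespan X T1 T2)"
    unfolding opt_makespan_def by (rule Min_in) auto
  then show ?thesis by auto
qed

lemma opt_makespan_reindex:
  assumes "\<And>X. makespan (f X) T1 T2 = makespan X U1 U2" "surj f"
  shows "opt_makespan T1 T2 = opt_makespan U1 U2"
proof -
  have "range (\<lambda>X. makespan X T1 T2) = (\<lambda>X. makespan X T1 T2) ` range f"
    using assms(2) by simp
  also have "\<dots> = range (\<lambda>X. makespan X U1 U2)"
    using assms(1) by (simp add: image_image)
  finally show ?thesis unfolding opt_makespan_def by simp
qed

lemma opt_makespan_swap: "opt_makespan T2 T1 = opt_makespan T1 T2"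
proof (rule opt_makespan_reindex[of "\<lambda>X j. \<not> X j"])
  show "surj (\<lambda>X j. \<not> X j)" by (rule surjI[of _ "\<lambda>X j. \<not> X j"]) simp
qed (rule makespan_Not_alloc)

lemma opt_makespan_perm:
  fixes T1 T2 :: "real^'n::finite"
  assumes p: "\<pi> permutes UNIV"
  shows "opt_makespan (perm_act T1 (inv \<pi>)) (perm_act T2 (inv \<pi>)) = opt_makespan T1 T2"
proof (rule opt_makespan_reindex[of "\<lambda>X j. X (\<pi> j)", symmetric])
  show "surj (\<lambda>X j. X (\<pi> j))"
    by (rule surjI[of _ "\<lambda>Y k. Y (inv \<pi> k)"]) (simp add: permutes_inverses(2)[OF p])
qed (rule makespan_permute_alloc[OF p])

lemma opt_makespan_pos:
  assumes "(T1, T2) \<in> pos_times"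
  shows "0 < opt_makespan T1 T2"
proof -
  obtain X where X: "opt_makespan T1 T2 = makespan X T1 T2" using opt_makespan_attained by blast
  have "0 < (\<Sum>j\<in>UNIV. if X j then T1 $ j else T2 $ j)"
    using assms by (intro sum_pos) (auto simp: pos_times_def)
  also have "\<dots> = (\<Sum>j\<in>UNIV. if X j then T1 $ j else 0) + (\<Sum>j\<in>UNIV. if X j then 0 else T2 $ j)"
    by (simp add: sum.distrib[symmetric] if_distrib cong: if_cong)
  finally show ?thesis unfolding X makespan_eq_sum_if by linarith
qed

lemma makespan_scale_le:
  fixes T1 T2 :: "real^'n::finite"
  assumes "0 < c" "c \<le> 1" "\<And>j. 0 \<le> T1 $ j" "\<And>j. 0 \<le> T2 $ j"
  shows "c * makespan X T1 T2 \<le> makespan X (c *\<^sub>R T1) T2"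
    and "makespan X (c *\<^sub>R T1) T2 \<le> makespan X T1 T2"
proof -
  define a where "a = (\<Sum>j\<in>UNIV. if X j then T1 $ j else 0)"
  define b where "b = (\<Sum>j\<in>UNIV. if X j then 0 else T2 $ j)"
  have "(\<Sum>j\<in>UNIV. if X j then (c *\<^sub>R T1) $ j else 0) = c * a"
    unfolding a_def sum_distrib_left by (intro sum.cong refl) simp
  then have m: "makespan X T1 T2 = max a b" "makespan X (c *\<^sub>R T1) T2 = max (c * a) b"
    unfolding makespan_eq_sum_if a_def b_def by simp_all
  have "0 \<le> a" "0 \<le> b" unfolding a_def b_def using assms by (auto intro: sum_nonneg)
  then have "c * a \<le> a" "c * b \<le> b" using assms(1,2) by (simp_all add: mult_left_le_one_le)
  then show "c * makespan X T1 T2 \<le> makespan X (c *\<^sub>R T1) T2"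
    and "makespan X (c *\<^sub>R T1) T2 \<le> makespan X T1 T2"
    unfolding m by (auto simp: max_def)
qed

lemma opt_makespan_scale_le:
  fixes T1 T2 :: "real^'n::finite"
  assumes "0 < c" "c \<le> 1" "\<And>j. 0 \<le> T1 $ j" "\<And>j. 0 \<le> T2 $ j"
  shows "opt_makespan (c *\<^sub>R T1) T2 \<le> opt_makespan T1 T2"
proof -
  obtain X where "opt_makespan T1 T2 = makespan X T1 T2" using opt_makespan_attained by blast
  then show ?thesis
    using opt_makespan_le[of "c *\<^sub>R T1" T2 X] makespan_scale_le(2)[OF assms, of X] by simp
qed

section \<open>The symmetry group\<close>

lemma vec_borel_measurableI:
  fixes f :: "'a \<Rightarrow> real^'n::finite"
  assumes "\<And>i. (\<lambda>x. f x $ i) \<in> borel_measurable M"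
  shows "f \<in> borel_measurable M"
proof (rule borel_measurable_euclidean_space[THEN iffD2], rule ballI)
  fix b :: "real^'n" assume "b \<in> Basis"
  then obtain i where "b = axis i 1" by (auto simp: Basis_vec_def Basis_real_def)
  then have "(\<lambda>x. f x \<bullet> b) = (\<lambda>x. f x $ i)" by (simp add: inner_axis)
  then show "(\<lambda>x. f x \<bullet> b) \<in> borel_measurable M" using assms by simp
qed

lemma perm_act_measurable [measurable]: "(\<lambda>z. perm_act z \<pi>) \<in> borel_measurable borel"
  by (rule vec_borel_measurableI) simp

lemma inv_act_measurable [measurable]: "inv_act g \<in> borel_measurable borel"
  by (rule vec_borel_measurableI) (cases g; simp add: inv_act_def)

definition sym_act :: "bool \<times> ('n::finite \<Rightarrow> 'n) \<Rightarrow> real^'n \<Rightarrow> real^'n" where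
  "sym_act a z = perm_act (inv_act (fst a) z) (snd a)"

definition sym_group :: "(bool \<times> ('n::finite \<Rightarrow> 'n)) set" where
  "sym_group = UNIV \<times> {\<pi>. \<pi> permutes UNIV}"

lemma sym_act_measurable [measurable]: "sym_act a \<in> borel_measurable borel"
  unfolding sym_act_def[abs_def] by measurable

lemma finite_sym_group: "finite sym_group"
  unfolding sym_group_def by (simp add: finite_permutations)

lemma sym_group_nonempty: "sym_group \<noteq> {}"
  unfolding sym_group_def using permutes_id by blast

lemma sym_act_sym_act: "sym_act h (sym_act a z) = sym_act (fst h \<noteq> fst a, snd a \<circ> snd h) z"
  unfolding sym_act_def inv_act_def perm_act_def
  by (cases "fst h"; cases "fst a") (simp_all add: vec_eq_iff)

lemma bij_betw_sym_group_mult: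
  assumes "h \<in> sym_group"
  shows "bij_betw (\<lambda>a. (fst h \<noteq> fst a, snd a \<circ> snd h)) sym_group sym_group"
proof (rule bij_betw_byWitness[where f'="\<lambda>a. (fst h \<noteq> fst a, snd a \<circ> inv (snd h))"])
  have p: "snd h permutes UNIV" using assms by (auto simp: sym_group_def)
  then show "\<forall>a\<in>sym_group. (fst h \<noteq> fst (fst h \<noteq> fst a, snd a \<circ> snd h),
        snd (fst h \<noteq> fst a, snd a \<circ> snd h) \<circ> inv (snd h)) = a"
    and "\<forall>a\<in>sym_group. (fst h \<noteq> fst (fst h \<noteq> fst a, snd a \<circ> inv (snd h)),
        snd (fst h \<noteq> fst a, snd a \<circ> inv (snd h)) \<circ> snd h) = a"
    by (auto simp: comp_assoc permutes_inv_o)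
  show "(\<lambda>a. (fst h \<noteq> fst a, snd a \<circ> snd h)) ` sym_group \<subseteq> sym_group"
    and "(\<lambda>a. (fst h \<noteq> fst a, snd a \<circ> inv (snd h))) ` sym_group \<subseteq> sym_group"
    using p by (auto simp: sym_group_def permutes_compose permutes_inv)
qed

definition pos_orthant :: "(real^'n::finite) set" where
  "pos_orthant = {z. \<forall>j. 0 < z $ j}"

lemma pos_orthant_sets [measurable]: "pos_orthant \<in> sets borel"
  unfolding pos_orthant_def by measurable

lemma vimage_sym_act_pos_orthant:
  fixes a :: "bool \<times> ('n::finite \<Rightarrow> 'n)"
  assumes "a \<in> sym_group"
  shows "sym_act a -` pos_orthant = pos_orthant"
proof -
  from assms have p: "snd a permutes UNIV" by (auto simp: sym_group_def)
  have "(\<forall>j. 0 < w $ snd a j) \<longleftrightarrow> (\<forall>j. 0 < w $ j)" for w :: "real^'n"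
    by (metis p permutes_inverses(1))
  then show ?thesis
    unfolding pos_orthant_def sym_act_def inv_act_def by auto
qed

lemma Pn_iff: "P \<in> Pn \<longleftrightarrow> prob_space P \<and> sets P = sets borel \<and> emeasure P pos_orthant = 1"
proof -
  have "emeasure P A = 1 \<longleftrightarrow> measure P A = 1" if "prob_space P" for A
    using finite_measure.emeasure_eq_measure[OF prob_space.axioms(1)[OF that]] by simp
  then show ?thesis unfolding Pn_def pos_orthant_def[symmetric] by blast
qed

lemma AE_pos_orthant: "P \<in> Pn \<Longrightarrow> AE z in P. z \<in> pos_orthant"
  unfolding Pn_def pos_orthant_def[symmetric] by (auto intro: prob_space.AE_prob_1)

section \<open>Symmetrization\<close>

definition symmetrization :: "(real^'n::finite) measure \<Rightarrow> (real^'n) measure" where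
  "symmetrization P = uniform_count_measure sym_group \<bind> (\<lambda>a. distr P borel (sym_act a))"

lemma nn_integral_uniform_count_measure_bij:
  assumes "finite A" "bij_betw m A A"
  shows "(\<integral>\<^sup>+x. f (m x) \<partial>uniform_count_measure A) = (\<integral>\<^sup>+x. f x \<partial>uniform_count_measure A)"
  using assms
  by (simp add: uniform_count_measure_def nn_integral_point_measure_finite
      sum.reindex_bij_betw[of m A A "\<lambda>x. ennreal (1 / real (card A)) * f x"])

lemma nn_integral_uniform_count_measure_le:
  assumes "finite A" "A \<noteq> {}" "\<And>x. x \<in> A \<Longrightarrow> f x \<le> c"
  shows "(\<integral>\<^sup>+x. f x \<partial>uniform_count_measure A) \<le> c"
proof -
  interpret prob_space "uniform_count_measure A"
    using assms(1,2) by (rule prob_space_uniform_count_measure)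
  have "(\<integral>\<^sup>+x. f x \<partial>uniform_count_measure A) \<le> (\<integral>\<^sup>+x. c \<partial>uniform_count_measure A)"
    using assms(3) by (intro nn_integral_mono) (simp add: space_uniform_count_measure)
  then show ?thesis by (simp add: emeasure_space_1)
qed

lemma space_eq_UNIV_if_sets_borel: "sets P = sets borel \<Longrightarrow> space P = UNIV"
  using sets_eq_imp_space_eq by fastforce

lemma uniform_sym_group_in_prob_algebra:
  "uniform_count_measure sym_group
     \<in> space (prob_algebra (count_space (sym_group :: (bool \<times> ('n::finite \<Rightarrow> 'n)) set)))"
  unfolding space_prob_algebra
  by (simp add: sets_uniform_count_measure_count_space prob_space_uniform_count_measure
      finite_sym_group sym_group_nonempty)

context
  fixes P :: "(real^'n::finite) measure"
  assumes P: "prob_space P" "sets P = sets borel"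
begin

lemma sym_act_measurable_P: "sym_act a \<in> P \<rightarrow>\<^sub>M borel"
  using measurable_cong_sets[OF P(2) refl] sym_act_measurable by blast

lemma distr_sym_act_measurable:
  "(\<lambda>a. distr P borel (sym_act a)) \<in> count_space sym_group \<rightarrow>\<^sub>M prob_algebra borel"
  unfolding measurable_count_space_eq1 space_prob_algebra
  using prob_space.prob_space_distr[OF P(1) sym_act_measurable_P] by simp

lemma prob_space_symmetrization: "prob_space (symmetrization P)"
  and sets_symmetrization: "sets (symmetrization P) = sets borel"
  using prob_space_bind'[OF uniform_sym_group_in_prob_algebra distr_sym_act_measurable]
    sets_bind'[OF uniform_sym_group_in_prob_algebra distr_sym_act_measurable]
  by (auto simp: symmetrization_def)

lemma emeasure_symmetrization:
  assumes "A \<in> sets borel"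
  shows "emeasure (symmetrization P) A
       = (\<integral>\<^sup>+a. emeasure P (sym_act a -` A) \<partial>uniform_count_measure sym_group)"
  unfolding symmetrization_def
  using emeasure_bind_prob_algebra[OF uniform_sym_group_in_prob_algebra distr_sym_act_measurable assms]
  by (simp add: emeasure_distr[OF sym_act_measurable_P assms] space_eq_UNIV_if_sets_borel[OF P(2)])

lemma nn_integral_symmetrization:
  assumes "f \<in> borel_measurable borel"
  shows "(\<integral>\<^sup>+z. f z \<partial>symmetrization P)
       = (\<integral>\<^sup>+a. (\<integral>\<^sup>+z. f z \<partial>distr P borel (sym_act a)) \<partial>uniform_count_measure sym_group)"
  unfolding symmetrization_def
proof (rule nn_integral_bind[OF assms])
  show "(\<lambda>a. distr P borel (sym_act a)) \<in> uniform_count_measure sym_group \<rightarrow>\<^sub>M subprob_algebra borel"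
    using measurable_prob_algebraD[OF distr_sym_act_measurable]
    by (simp add: measurable_cong_sets[OF sets_uniform_count_measure_count_space refl])
qed

text \<open>Composing with a fixed group element permutes the summands of the uniform mixture.\<close>
lemma symmetric_dist_symmetrization: "symmetric_dist (symmetrization P)"
  unfolding symmetric_dist_def
proof (intro allI impI)
  fix g :: bool and \<pi> :: "'n \<Rightarrow> 'n"
  assume "\<pi> permutes UNIV"
  then have h: "(g, \<pi>) \<in> sym_group" by (simp add: sym_group_def)
  have act: "(\<lambda>z. perm_act (inv_act g z) \<pi>) = sym_act (g, \<pi>)"
    by (simp add: sym_act_def[abs_def])
  show "distr (symmetrization P) borel (\<lambda>z. perm_act (inv_act g z) \<pi>) = symmetrization P"
    unfolding act
  proof (rule measure_eqI)
    fix A assume "A \<in> sets (distr (symmetrization P) borel (sym_act (g, \<pi>)))"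
    then have A: "A \<in> sets borel" by simp
    have meas: "sym_act (g, \<pi>) \<in> symmetrization P \<rightarrow>\<^sub>M borel"
      using measurable_cong_sets[OF sets_symmetrization refl] sym_act_measurable by blast
    have "emeasure (distr (symmetrization P) borel (sym_act (g, \<pi>))) A
        = emeasure (symmetrization P) (sym_act (g, \<pi>) -` A)"
      using emeasure_distr[OF meas A] space_eq_UNIV_if_sets_borel[OF sets_symmetrization] by simp
    also have "\<dots> = (\<integral>\<^sup>+a. emeasure P (sym_act (g \<noteq> fst a, snd a \<circ> \<pi>) -` A)
                      \<partial>uniform_count_measure sym_group)"
      using A by (simp add: emeasure_symmetrization vimage_def sym_act_sym_act)
    also have "\<dots> = emeasure (symmetrization P) A"
      using nn_integral_uniform_count_measure_bij[OF finite_sym_group bij_betw_sym_group_mult[OF h],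
          of "\<lambda>a. emeasure P (sym_act a -` A)"]
      by (simp add: emeasure_symmetrization A)
    finally show "emeasure (distr (symmetrization P) borel (sym_act (g, \<pi>))) A
        = emeasure (symmetrization P) A" .
  qed (simp add: sets_symmetrization)
qed

end

lemma symmetrization_Pn:
  fixes P :: "(real^'n::finite) measure"
  assumes "P \<in> Pn"
  shows "symmetrization P \<in> Pn"
proof -
  have P: "prob_space P" "sets P = sets borel" "emeasure P pos_orthant = 1"
    using assms by (auto simp: Pn_iff)
  have "emeasure (symmetrization P) pos_orthant
      = (\<integral>\<^sup>+a. 1 \<partial>uniform_count_measure (sym_group :: (bool \<times> ('n \<Rightarrow> 'n)) set))"
    unfolding emeasure_symmetrization[OF P(1,2) pos_orthant_sets]
    by (rule nn_integral_cong) (simp add: space_uniform_count_measure vimage_sym_act_pos_orthant P(3))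
  also have "\<dots> = 1"
    using prob_space.emeasure_space_1[OF prob_space_uniform_count_measure[OF finite_sym_group sym_group_nonempty]]
    by simp
  finally have "emeasure (symmetrization P) pos_orthant = 1" .
  then show ?thesis using P by (simp add: Pn_iff prob_space_symmetrization sets_symmetrization)
qed

section \<open>Competitive ratios\<close>

definition competitive :: "(real^'n::finite) measure \<Rightarrow> real \<Rightarrow> bool" where
  "competitive P r \<longleftrightarrow>
     (\<forall>T1 T2. (T1, T2) \<in> pos_times \<longrightarrow> exp_makespan P T1 T2 \<le> r * opt_makespan T1 T2)"

lemma pos_timesD:
  "(T1, T2) \<in> pos_times \<Longrightarrow> 0 < T1 $ j" "(T1, T2) \<in> pos_times \<Longrightarrow> 0 < T2 $ j"
  by (simp_all add: pos_times_def)

lemma pos_times_nonempty: "\<exists>T1 T2. (T1, T2) \<in> pos_times"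
  by (rule exI[of _ "\<chi> j. 1"])+ (simp add: pos_times_def)

lemma borel_measurable_makespan_alg_alloc:
  assumes [measurable]: "f \<in> M \<rightarrow>\<^sub>M borel"
  shows "(\<lambda>z. makespan (alg_alloc (f z) T1 T2) U1 U2) \<in> borel_measurable M"
  unfolding alg_alloc_def by (rule borel_measurable_makespan) measurable

lemma integrable_makespan:
  fixes T1 T2 :: "real^'n::finite"
  assumes "prob_space P"
    and "(\<lambda>z. makespan (X z) T1 T2) \<in> borel_measurable P"
    and "\<And>j. 0 \<le> T1 $ j" "\<And>j. 0 \<le> T2 $ j"
  shows "integrable P (\<lambda>z. makespan (X z) T1 T2)"
proof (rule finite_measure.integrable_const_bound[OF prob_space.axioms(1)[OF assms(1)] _ assms(2)])
  show "AE z in P. norm (makespan (X z) T1 T2) \<le> (\<Sum>j\<in>UNIV. T1 $ j) + (\<Sum>j\<in>UNIV. T2 $ j)"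
    using makespan_nonneg[OF assms(3,4)] makespan_le_sum[OF assms(3,4)] by auto
qed

lemma exp_makespan_nonneg:
  assumes "(T1, T2) \<in> pos_times"
  shows "0 \<le> exp_makespan P T1 T2"
  unfolding exp_makespan_def
  using assms by (intro integral_nonneg_AE AE_I2 makespan_nonneg) (auto dest: pos_timesD less_imp_le)

lemma nn_integral_makespan_alg_alloc:
  assumes "prob_space P" "sets P = sets borel" "(T1, T2) \<in> pos_times"
  shows "(\<integral>\<^sup>+z. ennreal (makespan (alg_alloc z T1 T2) T1 T2) \<partial>P) = ennreal (exp_makespan P T1 T2)"
proof -
  have nonneg: "\<And>j. 0 \<le> T1 $ j" "\<And>j. 0 \<le> T2 $ j"
    using assms(3) by (auto dest: pos_timesD less_imp_le)
  have "(\<lambda>z. makespan (alg_alloc z T1 T2) T1 T2) \<in> borel_measurable P"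
    by (rule borel_measurable_makespan_alg_alloc[OF measurable_ident_sets[OF assms(2)]])
  then show ?thesis
    unfolding exp_makespan_def
    by (intro nn_integral_eq_integral integrable_makespan assms(1) nonneg AE_I2 makespan_nonneg)
qed

lemma exp_makespan_distr:
  assumes "sets P = sets borel" "f \<in> borel \<rightarrow>\<^sub>M borel"
  shows "exp_makespan (distr P borel f) T1 T2 = (\<integral>z. makespan (alg_alloc (f z) T1 T2) T1 T2 \<partial>P)"
  unfolding exp_makespan_def
  using assms(2) measurable_cong_sets[OF assms(1) refl]
  by (intro integral_distr borel_measurable_makespan_alg_alloc measurable_ident) auto

lemma ratio_le_ereal_iff: "ratio P \<le> ereal r \<longleftrightarrow> competitive P r"
proof -
  have "ereal (exp_makespan P T1 T2 / opt_makespan T1 T2) \<le> ereal r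
      \<longleftrightarrow> exp_makespan P T1 T2 \<le> r * opt_makespan T1 T2" if "(T1, T2) \<in> pos_times" for T1 T2
    using opt_makespan_pos[OF that] by (simp add: pos_divide_le_eq)
  then show ?thesis
    unfolding ratio_def competitive_def SUP_le_iff by auto
qed

lemma ratio_neq_MInfty: "ratio (P :: (real^'n::finite) measure) \<noteq> -\<infinity>"
proof -
  obtain T1 T2 :: "real^'n" where T: "(T1, T2) \<in> pos_times" using pos_times_nonempty by blast
  have "ereal (exp_makespan P T1 T2 / opt_makespan T1 T2) \<le> ratio P"
    unfolding ratio_def using SUP_upper[OF T,
      of "\<lambda>T. ereal (exp_makespan P (fst T) (snd T) / opt_makespan (fst T) (snd T))"] by simp
  then show ?thesis by auto
qed

lemma competitive_nonneg:
  fixes P :: "(real^'n::finite) measure"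
  assumes "competitive P r"
  shows "0 \<le> r"
proof -
  obtain T1 T2 :: "real^'n" where T: "(T1, T2) \<in> pos_times" using pos_times_nonempty by blast
  have "0 \<le> r * opt_makespan T1 T2"
    using assms exp_makespan_nonneg[OF T, of P] T unfolding competitive_def by (meson order_trans)
  then show ?thesis
    using opt_makespan_pos[OF T] by (simp add: zero_le_mult_iff)
qed

lemma competitive_distr_perm:
  fixes P :: "(real^'n::finite) measure"
  assumes P: "sets P = sets borel" and p: "\<pi> permutes UNIV" and r: "competitive P r"
  shows "competitive (distr P borel (\<lambda>z. perm_act z \<pi>)) r"
  unfolding competitive_def
proof (intro allI impI)
  fix T1 T2 :: "real^'n" assume T: "(T1, T2) \<in> pos_times"
  define U1 where "U1 = perm_act T1 (inv \<pi>)"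
  define U2 where "U2 = perm_act T2 (inv \<pi>)"
  have U: "(U1, U2) \<in> pos_times"
    using T by (simp add: pos_times_def U1_def U2_def)
  have "alg_alloc (perm_act z \<pi>) T1 T2 = (\<lambda>j. alg_alloc z U1 U2 (\<pi> j))" for z
    by (simp add: alg_alloc_def U1_def U2_def permutes_inverses(2)[OF p])
  then have "makespan (alg_alloc (perm_act z \<pi>) T1 T2) T1 T2 = makespan (alg_alloc z U1 U2) U1 U2" for z
    using makespan_permute_alloc[OF p] by (simp add: U1_def U2_def)
  then have "exp_makespan (distr P borel (\<lambda>z. perm_act z \<pi>)) T1 T2 = exp_makespan P U1 U2"
    unfolding exp_makespan_distr[OF P perm_act_measurable] by (simp add: exp_makespan_def)
  also have "\<dots> \<le> r * opt_makespan U1 U2"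
    using r U unfolding competitive_def by blast
  also have "\<dots> = r * opt_makespan T1 T2"
    unfolding U1_def U2_def opt_makespan_perm[OF p] ..
  finally show "exp_makespan (distr P borel (\<lambda>z. perm_act z \<pi>)) T1 T2 \<le> r * opt_makespan T1 T2" .
qed

lemma competitive_scaled_le:
  fixes S1 S2 :: "real^'n::finite"
  assumes P: "prob_space P" "sets P = sets borel" and r: "competitive P r"
    and S: "(S1, S2) \<in> pos_times" and c: "0 < c" "c \<le> 1"
  shows "c * (\<integral>z. makespan (alg_alloc z (c *\<^sub>R S1) S2) S1 S2 \<partial>P) \<le> r * opt_makespan S1 S2"
proof -
  let ?X = "\<lambda>z. alg_alloc z (c *\<^sub>R S1) S2"
  have cS: "(c *\<^sub>R S1, S2) \<in> pos_times"
    using S c by (simp add: pos_times_def)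
  have nonneg: "\<And>j. 0 \<le> S1 $ j" "\<And>j. 0 \<le> S2 $ j" "\<And>j. 0 \<le> (c *\<^sub>R S1) $ j"
    using pos_timesD[OF S] pos_timesD[OF cS] by (auto intro: less_imp_le)
  have meas: "(\<lambda>z. makespan (?X z) U1 U2) \<in> borel_measurable P" for U1 U2
    by (rule borel_measurable_makespan_alg_alloc[OF measurable_ident_sets[OF P(2)]])
  have "c * (\<integral>z. makespan (?X z) S1 S2 \<partial>P) = (\<integral>z. c * makespan (?X z) S1 S2 \<partial>P)"
    by simp
  also have "\<dots> \<le> (\<integral>z. makespan (?X z) (c *\<^sub>R S1) S2 \<partial>P)"
    using makespan_scale_le(1)[OF c nonneg(1,2)]
    by (intro integral_mono integrable_mult_right integrable_makespan P(1) meas nonneg)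
  also have "\<dots> \<le> r * opt_makespan (c *\<^sub>R S1) S2"
    using r cS unfolding competitive_def exp_makespan_def by blast
  also have "\<dots> \<le> r * opt_makespan S1 S2"
    using opt_makespan_scale_le[OF c nonneg(1,2)] competitive_nonneg[OF r]
    by (rule mult_left_mono)
  finally show ?thesis .
qed

lemma alg_alloc_scaled_eventually:
  fixes S1 S2 z :: "real^'n::finite"
  assumes c: "c \<longlonglongrightarrow> 1" "\<And>k. c k < 1" and S: "(S1, S2) \<in> pos_times"
  shows "\<forall>\<^sub>F k in sequentially. alg_alloc z (c k *\<^sub>R S1) S2 = (\<lambda>j. S1 $ j / S2 $ j \<le> z $ j)"
proof -
  have each: "\<forall>\<^sub>F k in sequentially. (c k * \<rho> < z $ j) = (\<rho> \<le> z $ j)" if "0 < \<rho>" for j \<rho>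
  proof (cases "\<rho> \<le> z $ j")
    case True
    have "c k * \<rho> < \<rho>" for k using mult_strict_right_mono[OF c(2) that] by simp
    then show ?thesis using True by (auto intro: always_eventually less_le_trans)
  next
    case False
    have "(\<lambda>k. c k * \<rho>) \<longlonglongrightarrow> 1 * \<rho>" by (intro tendsto_mult c(1) tendsto_const)
    then have "\<forall>\<^sub>F k in sequentially. z $ j < c k * \<rho>"
      using False by (intro order_tendstoD(1)) auto
    then show ?thesis using False by (auto elim: eventually_mono)
  qed
  then have "\<forall>\<^sub>F k in sequentially. \<forall>j. (c k * (S1 $ j / S2 $ j) < z $ j) = (S1 $ j / S2 $ j \<le> z $ j)"
    using pos_timesD[OF S] by (intro eventually_all_finite each divide_pos_pos)
  then show ?thesis
    by eventually_elim (simp add: alg_alloc_def fun_eq_iff)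
qed

lemma competitive_nonstrict_le:
  fixes S1 S2 :: "real^'n::finite"
  assumes P: "prob_space P" "sets P = sets borel" and r: "competitive P r"
    and S: "(S1, S2) \<in> pos_times"
  shows "(\<integral>z. makespan (\<lambda>j. S1 $ j / S2 $ j \<le> z $ j) S1 S2 \<partial>P) \<le> r * opt_makespan S1 S2"
proof -
  define c where "c k = 1 - inverse (real (Suc (Suc k)))" for k
  have c: "0 < c k" "c k < 1" for k
    unfolding c_def by (auto simp: inverse_less_1_iff)
  have "(\<lambda>k. 1 - inverse (real (Suc (Suc k)))) \<longlonglongrightarrow> 1 - 0"
    by (intro tendsto_diff tendsto_const LIMSEQ_Suc[OF LIMSEQ_inverse_real_of_nat])
  then have c_lim: "c \<longlonglongrightarrow> 1" by (simp add: c_def[abs_def])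
  define s where "s k z = makespan (alg_alloc z (c k *\<^sub>R S1) S2) S1 S2" for k z
  define f where "f z = makespan (\<lambda>j. S1 $ j / S2 $ j \<le> z $ j) S1 S2" for z
  have nonneg: "\<And>j. 0 \<le> S1 $ j" "\<And>j. 0 \<le> S2 $ j"
    using S by (auto dest: pos_timesD less_imp_le)
  have "(\<lambda>k. \<integral>z. s k z \<partial>P) \<longlonglongrightarrow> (\<integral>z. f z \<partial>P)"
  proof (rule integral_dominated_convergence[where w="\<lambda>_. (\<Sum>j\<in>UNIV. S1 $ j) + (\<Sum>j\<in>UNIV. S2 $ j)"])
    show "f \<in> borel_measurable P"
      unfolding f_def[abs_def] measurable_cong_sets[OF P(2) refl]
      by (intro borel_measurable_makespan) measurable
    show "s k \<in> borel_measurable P" for k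
      unfolding s_def[abs_def]
      by (rule borel_measurable_makespan_alg_alloc[OF measurable_ident_sets[OF P(2)]])
    show "integrable P (\<lambda>_. (\<Sum>j\<in>UNIV. S1 $ j) + (\<Sum>j\<in>UNIV. S2 $ j))"
      using prob_space.axioms(1)[OF P(1)] by (rule finite_measure.integrable_const)
    show "AE z in P. (\<lambda>k. s k z) \<longlonglongrightarrow> f z"
    proof (rule AE_I2)
      fix z
      have "\<forall>\<^sub>F k in sequentially. s k z = f z"
        using alg_alloc_scaled_eventually[OF c_lim c(2) S, of z]
        by (rule eventually_mono) (simp add: s_def f_def)
      then show "(\<lambda>k. s k z) \<longlonglongrightarrow> f z" by (rule tendsto_eventually)
    qed
    show "AE z in P. norm (s k z) \<le> (\<Sum>j\<in>UNIV. S1 $ j) + (\<Sum>j\<in>UNIV. S2 $ j)" for k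
      using makespan_nonneg[OF nonneg] makespan_le_sum[OF nonneg] by (simp add: s_def)
  qed
  then have "(\<lambda>k. c k * (\<integral>z. s k z \<partial>P)) \<longlonglongrightarrow> 1 * (\<integral>z. f z \<partial>P)"
    by (intro tendsto_mult c_lim)
  moreover have "c k * (\<integral>z. s k z \<partial>P) \<le> r * opt_makespan S1 S2" for k
    unfolding s_def by (rule competitive_scaled_le[OF P r S c(1) less_imp_le[OF c(2)]])
  ultimately have "1 * (\<integral>z. f z \<partial>P) \<le> r * opt_makespan S1 S2"
    by (blast intro: LIMSEQ_le_const2)
  then show ?thesis by (simp add: f_def)
qed

lemma alg_alloc_inv_act:
  assumes "\<And>j. 0 < z $ j" "(T1, T2) \<in> pos_times"
  shows "alg_alloc (inv_act True z) T1 T2 = (\<lambda>j. \<not> T2 $ j / T1 $ j \<le> z $ j)"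
proof
  fix j
  have "0 < z $ j" "0 < T1 $ j" "0 < T2 $ j" using assms by (auto dest: pos_timesD)
  then show "alg_alloc (inv_act True z) T1 T2 j = (\<not> T2 $ j / T1 $ j \<le> z $ j)"
    by (simp add: alg_alloc_def inv_act_def field_simps not_le mult.commute)
qed

lemma competitive_distr_inv:
  fixes P :: "(real^'n::finite) measure"
  assumes P: "P \<in> Pn" and r: "competitive P r"
  shows "competitive (distr P borel (inv_act True)) r"
  unfolding competitive_def
proof (intro allI impI)
  fix T1 T2 :: "real^'n" assume T: "(T1, T2) \<in> pos_times"
  then have T': "(T2, T1) \<in> pos_times" by (simp add: pos_times_def)
  have P': "prob_space P" "sets P = sets borel" using P by (simp_all add: Pn_iff)
  have "exp_makespan (distr P borel (inv_act True)) T1 T2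
      = (\<integral>z. makespan (alg_alloc (inv_act True z) T1 T2) T1 T2 \<partial>P)"
    by (rule exp_makespan_distr[OF P'(2) inv_act_measurable])
  also have "\<dots> = (\<integral>z. makespan (\<lambda>j. T2 $ j / T1 $ j \<le> z $ j) T2 T1 \<partial>P)"
  proof (rule integral_cong_AE)
    show "(\<lambda>z. makespan (alg_alloc (inv_act True z) T1 T2) T1 T2) \<in> borel_measurable P"
      by (rule borel_measurable_makespan_alg_alloc)
        (simp add: measurable_cong_sets[OF P'(2) refl])
    show "(\<lambda>z. makespan (\<lambda>j. T2 $ j / T1 $ j \<le> z $ j) T2 T1) \<in> borel_measurable P"
      unfolding measurable_cong_sets[OF P'(2) refl] by (intro borel_measurable_makespan) measurable
    show "AE z in P. makespan (alg_alloc (inv_act True z) T1 T2) T1 T2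
        = makespan (\<lambda>j. T2 $ j / T1 $ j \<le> z $ j) T2 T1"
      using AE_pos_orthant[OF P]
      by (rule AE_mp) (simp add: pos_orthant_def alg_alloc_inv_act[OF _ T] makespan_Not_alloc)
  qed
  also have "\<dots> \<le> r * opt_makespan T2 T1"
    by (rule competitive_nonstrict_le[OF P' r T'])
  finally show "exp_makespan (distr P borel (inv_act True)) T1 T2 \<le> r * opt_makespan T1 T2"
    by (simp add: opt_makespan_swap)
qed

lemma competitive_distr_sym_act:
  fixes P :: "(real^'n::finite) measure"
  assumes P: "P \<in> Pn" and a: "a \<in> sym_group" and r: "competitive P r"
  shows "competitive (distr P borel (sym_act a)) r"
proof -
  obtain g \<pi> where a_eq: "a = (g, \<pi>)" and p: "\<pi> permutes UNIV"
    using a by (auto simp: sym_group_def)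
  have sets: "sets P = sets borel" using P by (simp add: Pn_iff)
  have "competitive (distr P borel (inv_act g)) r"
  proof (cases g)
    case True
    then show ?thesis using competitive_distr_inv[OF P r] by simp
  next
    case False
    then have "inv_act g = (\<lambda>z :: real^'n. z)" by (simp add: inv_act_def fun_eq_iff)
    then have "distr P borel (inv_act g) = P"
      using distr_id2[OF sets[symmetric]] by simp
    then show ?thesis using r by simp
  qed
  then have "competitive (distr (distr P borel (inv_act g)) borel (\<lambda>z. perm_act z \<pi>)) r"
    by (rule competitive_distr_perm[OF sets_distr p])
  moreover have "distr (distr P borel (inv_act g)) borel (\<lambda>z. perm_act z \<pi>) = distr P borel (sym_act a)"
  proof -
    have "inv_act g \<in> P \<rightarrow>\<^sub>M borel"
      using measurable_cong_sets[OF sets refl] inv_act_measurable by blast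
    then show ?thesis
      by (simp add: distr_distr[OF perm_act_measurable] a_eq comp_def sym_act_def[abs_def])
  qed
  ultimately show ?thesis by simp
qed

lemma competitive_symmetrization:
  fixes P :: "(real^'n::finite) measure"
  assumes P: "P \<in> Pn" and r: "competitive P r"
  shows "competitive (symmetrization P) r"
  unfolding competitive_def
proof (intro allI impI)
  fix T1 T2 :: "real^'n" assume T: "(T1, T2) \<in> pos_times"
  have P': "prob_space P" "sets P = sets borel" using P by (simp_all add: Pn_iff)
  have "ennreal (exp_makespan (symmetrization P) T1 T2)
      = (\<integral>\<^sup>+z. ennreal (makespan (alg_alloc z T1 T2) T1 T2) \<partial>symmetrization P)"
    using nn_integral_makespan_alg_alloc[OF prob_space_symmetrization[OF P'] sets_symmetrization[OF P'] T]
    by simp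
  also have "\<dots> = (\<integral>\<^sup>+a. (\<integral>\<^sup>+z. ennreal (makespan (alg_alloc z T1 T2) T1 T2) \<partial>distr P borel (sym_act a))
                    \<partial>uniform_count_measure sym_group)"
    by (intro nn_integral_symmetrization[OF P'] measurable_compose[OF _ measurable_ennreal]
        borel_measurable_makespan_alg_alloc[of "\<lambda>z. z", simplified] measurable_id)
  also have "\<dots> \<le> ennreal (r * opt_makespan T1 T2)"
  proof (rule nn_integral_uniform_count_measure_le[OF finite_sym_group sym_group_nonempty])
    fix a :: "bool \<times> ('n \<Rightarrow> 'n)" assume a: "a \<in> sym_group"
    have "prob_space (distr P borel (sym_act a))"
      using prob_space.prob_space_distr[OF P'(1) sym_act_measurable_P[OF P']] .
    then have "(\<integral>\<^sup>+z. ennreal (makespan (alg_alloc z T1 T2) T1 T2) \<partial>distr P borel (sym_act a))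
        = ennreal (exp_makespan (distr P borel (sym_act a)) T1 T2)"
      by (rule nn_integral_makespan_alg_alloc[OF _ sets_distr T])
    also have "\<dots> \<le> ennreal (r * opt_makespan T1 T2)"
      using competitive_distr_sym_act[OF P a r] T unfolding competitive_def by (blast intro: ennreal_leI)
    finally show "(\<integral>\<^sup>+z. ennreal (makespan (alg_alloc z T1 T2) T1 T2) \<partial>distr P borel (sym_act a))
        \<le> ennreal (r * opt_makespan T1 T2)" .
  qed
  finally show "exp_makespan (symmetrization P) T1 T2 \<le> r * opt_makespan T1 T2"
    using competitive_nonneg[OF r] opt_makespan_pos[OF T] by (simp add: ennreal_le_iff)
qed

lemma ratio_symmetrization_le:
  fixes P :: "(real^'n::finite) measure"
  assumes "P \<in> Pn"
  shows "ratio (symmetrization P) \<le> ratio P"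
proof (cases "ratio P")
  case (real r)
  then have "competitive P r" using ratio_le_ereal_iff[of P r] by simp
  then show ?thesis
    using competitive_symmetrization[OF assms] ratio_le_ereal_iff real by metis
qed (simp_all add: ratio_neq_MInfty)

theorem theorem4:
  shows "(INF P\<in>(Pn :: (real^'n::finite) measure set). ratio P)
       = (INF P\<in>{P \<in> (Pn :: (real^'n::finite) measure set). symmetric_dist P}. ratio P)"
    (is "?all = ?symmetric")
proof (rule antisym)
  show "?all \<le> ?symmetric" by (rule INF_superset_mono) auto
  show "?symmetric \<le> ?all"
  proof (rule INF_greatest)
    fix P :: "(real^'n) measure" assume P: "P \<in> Pn"
    then have "symmetrization P \<in> {P \<in> Pn. symmetric_dist P}"
      using symmetrization_Pn symmetric_dist_symmetrization by (auto simp: Pn_iff)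
    then have "?symmetric \<le> ratio (symmetrization P)" by (rule INF_lower)
    also have "\<dots> \<le> ratio P" by (rule ratio_symmetrization_le[OF P])
    finally show "?symmetric \<le> ratio P" .
  qed
qed

end
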